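(* Let $R=\mathbb{F}_q+v\mathbb{F}_q+v^2\mathbb{F}_q$ with $v^3=v$, let $C_1,C_2,C_3$ be linear codes of length $n$ over $\mathbb{F}_q$, and let $C=vC_1\oplus(1-v)C_2\oplus(1-v^2)C_3=\{va+(1-v)b+(1-v^2)d: a\in C_1,b\in C_2,d\in C_3\}$ be a linear code over $R$. Then $C$ is cyclic over $R$ if and only if $C_1$, $C_2$ and $C_3$ are cyclic codes of length $n$ over $\mathbb{F}_q$.
   Context: $q$ is a prime power and $R=\mathbb{F}_q[v]/\langle v^3-v\rangle$. A linear code of length $n$ over $R$ is an $R$-submodule of $R^n$. A code $C$ (over $R$ or $\mathbb{F}_q$) is cyclic if $(c_{n-1},c_0,\dots,c_{n-2})\in C$ whenever $(c_0,\dots,c_{n-1})\in C$. *)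

theory Defs
  imports Main
begin

text \<open>The ring R = F[v]/(v^3 - v); an element VR a0 a1 a2 stands for a0 + a1 v + a2 v^2.\<close>
datatype 'a vring = VR 'a 'a 'a

instantiation vring :: (comm_ring_1) comm_ring_1
begin


definition "0 = VR 0 0 0"
definition "1 = VR 1 0 0"
fun plus_vring :: "'a vring \<Rightarrow> 'a vring \<Rightarrow> 'a vring" where
  "plus_vring (VR a0 a1 a2) (VR b0 b1 b2) = VR (a0 + b0) (a1 + b1) (a2 + b2)"
fun minus_vring :: "'a vring \<Rightarrow> 'a vring \<Rightarrow> 'a vring" where
  "minus_vring (VR a0 a1 a2) (VR b0 b1 b2) = VR (a0 - b0) (a1 - b1) (a2 - b2)"
fun uminus_vring :: "'a vring \<Rightarrow> 'a vring" where
  "uminus_vring (VR a0 a1 a2) = VR (- a0) (- a1) (- a2)"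
fun times_vring :: "'a vring \<Rightarrow> 'a vring \<Rightarrow> 'a vring" where
  "times_vring (VR a0 a1 a2) (VR b0 b1 b2) =
     VR (a0 * b0)
        (a0 * b1 + a1 * b0 + a1 * b2 + a2 * b1)
        (a0 * b2 + a1 * b1 + a2 * b0 + a2 * b2)"

instance
proof
  fix a b c :: "'a vring"
  show "a * b * c = a * (b * c)"
    by (cases a; cases b; cases c) (simp add: algebra_simps)
  show "a * b = b * a"
    by (cases a; cases b) (simp add: algebra_simps)
  show "1 * a = a"
    by (cases a) (simp add: one_vring_def)
  show "(a + b) * c = a * c + b * c"
    by (cases a; cases b; cases c) (simp add: algebra_simps)
  show "a + b + c = a + (b + c)"
    by (cases a; cases b; cases c) (simp add: algebra_simps)
  show "a + b = b + a"
    by (cases a; cases b) (simp add: algebra_simps)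
  show "0 + a = a"
    by (cases a) (simp add: zero_vring_def)
  show "- a + a = 0"
    by (cases a) (simp add: zero_vring_def)
  show "a - b = a + - b"
    by (cases a; cases b) simp
  show "(0::'a vring) \<noteq> 1"
    by (simp add: zero_vring_def one_vring_def)
qed

end

definition emb :: "'a::comm_ring_1 \<Rightarrow> 'a vring" where "emb c = VR c 0 0"
definition vv :: "'a::comm_ring_1 vring" where "vv = VR 0 1 0"

definition linear_code :: "nat \<Rightarrow> 'r::comm_ring_1 list set \<Rightarrow> bool" where
  "linear_code n C \<longleftrightarrow> (\<forall>x\<in>C. length x = n) \<and> replicate n 0 \<in> C \<and>
     (\<forall>x\<in>C. \<forall>y\<in>C. map2 (+) x y \<in> C) \<and> (\<forall>r. \<forall>x\<in>C. map ((*) r) x \<in> C)"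

definition cshift :: "'r list \<Rightarrow> 'r list" where
  "cshift c = (if c = [] then [] else last c # butlast c)"

definition cyclic :: "'r list set \<Rightarrow> bool" where
  "cyclic C \<longleftrightarrow> (\<forall>c\<in>C. cshift c \<in> C)"

definition vcomb :: "'a::comm_ring_1 list set \<Rightarrow> 'a list set \<Rightarrow> 'a list set \<Rightarrow> 'a vring list set" where
  "vcomb C1 C2 C3 = {map (\<lambda>(x, y, z). vv * emb x + (1 - vv) * emb y + (1 - vv^2) * emb z)
                        (zip a (zip b d)) | a b d. a \<in> C1 \<and> b \<in> C2 \<and> d \<in> C3}"

end

theory Submission
  imports Defs
begin

text \<open>Since \<open>v\<close>, \<open>1 - v\<close> and \<open>1 - v\<^sup>2\<close> span \<open>R\<close> over the base ring, an element
  \<open>v x + (1 - v) y + (1 - v\<^sup>2) z\<close> has coordinates \<open>(y + z, x - y, -z)\<close>, from which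
  \<open>x, y, z\<close> can be read off. So a word of \<open>vcomb C1 C2 C3\<close> determines its three components,
  and the cyclic shift acts on it componentwise; hence shifting stays in \<open>vcomb C1 C2 C3\<close>
  exactly when it stays in each \<open>Ci\<close>.\<close>

definition vcomb_elem :: "'a::comm_ring_1 \<Rightarrow> 'a \<Rightarrow> 'a \<Rightarrow> 'a vring" where
  "vcomb_elem x y z = VR (y + z) (x - y) (- z)"

lemma vcomb_elem_eq:
  "vv * emb x + (1 - vv) * emb y + (1 - vv^2) * emb z = vcomb_elem x y (z::'a::comm_ring_1)"
  by (simp add: vv_def emb_def one_vring_def vcomb_elem_def power2_eq_square algebra_simps)

lemma vcomb_elem_inject:
  "vcomb_elem x y z = vcomb_elem x' y' z' \<longleftrightarrow> x = x' \<and> y = y' \<and> (z::'a::comm_ring_1) = z'"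
  by (auto simp: vcomb_elem_def)

definition vcomb_word :: "'a::comm_ring_1 list \<Rightarrow> 'a list \<Rightarrow> 'a list \<Rightarrow> 'a vring list" where
  "vcomb_word a b d = map (\<lambda>(x, y, z). vcomb_elem x y z) (zip a (zip b d))"

lemma vcomb_eq_vcomb_word:
  "vcomb C1 C2 C3 = {vcomb_word a b d | a b d. a \<in> C1 \<and> b \<in> C2 \<and> d \<in> C3}"
  unfolding vcomb_def vcomb_word_def by (simp add: vcomb_elem_eq)

lemma length_cshift [simp]: "length (cshift c) = length c"
  by (simp add: cshift_def)

lemma cshift_map: "cshift (map f xs) = map f (cshift xs)"
  by (simp add: cshift_def last_map map_butlast)

lemma cshift_zip: "length a = length b \<Longrightarrow> cshift (zip a b) = zip (cshift a) (cshift b)"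
  by (induction a b rule: rev_induct2) (simp_all add: cshift_def)

lemma cshift_vcomb_word:
  assumes "length a = length b" and "length b = length d"
  shows "cshift (vcomb_word a b d) = vcomb_word (cshift a) (cshift b) (cshift d)"
  using assms unfolding vcomb_word_def by (simp add: cshift_map cshift_zip)

lemma vcomb_word_inject:
  assumes "length a = n" "length b = n" "length d = n"
    and "length a' = n" "length b' = n" "length d' = n"
  shows "vcomb_word a b d = vcomb_word a' b' d' \<longleftrightarrow> a = a' \<and> b = b' \<and> d = d'"
proof
  assume eq: "vcomb_word a b d = vcomb_word a' b' d'"
  have "a ! i = a' ! i \<and> b ! i = b' ! i \<and> d ! i = d' ! i" if "i < n" for i
  proof -
    have "vcomb_word a b d ! i = vcomb_word a' b' d' ! i" using eq by simp
    with assms \<open>i < n\<close> show ?thesis by (simp add: vcomb_word_def vcomb_elem_inject)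
  qed
  with assms show "a = a' \<and> b = b' \<and> d = d'" by (metis nth_equalityI)
qed simp

context
  fixes C1 C2 C3 :: "'a::comm_ring_1 list set" and n :: nat
  assumes length_C1: "\<forall>x\<in>C1. length x = n"
    and length_C2: "\<forall>x\<in>C2. length x = n"
    and length_C3: "\<forall>x\<in>C3. length x = n"
begin

lemma cyclic_vcomb:
  assumes "cyclic C1" "cyclic C2" "cyclic C3"
  shows "cyclic (vcomb C1 C2 C3)"
  unfolding cyclic_def
proof
  fix c assume "c \<in> vcomb C1 C2 C3"
  then obtain a b d where mem: "a \<in> C1" "b \<in> C2" "d \<in> C3" and c: "c = vcomb_word a b d"
    by (auto simp: vcomb_eq_vcomb_word)
  have "cshift c = vcomb_word (cshift a) (cshift b) (cshift d)"
    using c mem length_C1 length_C2 length_C3 by (simp add: cshift_vcomb_word)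
  moreover have "cshift a \<in> C1" "cshift b \<in> C2" "cshift d \<in> C3"
    using assms mem by (auto simp: cyclic_def)
  ultimately show "cshift c \<in> vcomb C1 C2 C3"
    by (auto simp: vcomb_eq_vcomb_word)
qed

lemma cshift_components_mem:
  assumes cyc: "cyclic (vcomb C1 C2 C3)" and mem: "a \<in> C1" "b \<in> C2" "d \<in> C3"
  shows "cshift a \<in> C1 \<and> cshift b \<in> C2 \<and> cshift d \<in> C3"
proof -
  have "vcomb_word a b d \<in> vcomb C1 C2 C3"
    using mem by (auto simp: vcomb_eq_vcomb_word)
  then have "cshift (vcomb_word a b d) \<in> vcomb C1 C2 C3"
    using cyc by (simp add: cyclic_def)
  then obtain a' b' d' where mem': "a' \<in> C1" "b' \<in> C2" "d' \<in> C3"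
    and eq: "cshift (vcomb_word a b d) = vcomb_word a' b' d'"
    by (auto simp: vcomb_eq_vcomb_word)
  have "vcomb_word (cshift a) (cshift b) (cshift d) = vcomb_word a' b' d'"
    using eq mem length_C1 length_C2 length_C3 by (simp add: cshift_vcomb_word)
  then have "cshift a = a' \<and> cshift b = b' \<and> cshift d = d'"
    using mem mem' length_C1 length_C2 length_C3 by (subst (asm) vcomb_word_inject) auto
  with mem' show ?thesis by simp
qed

lemma cyclic_vcomb_iff:
  assumes "C1 \<noteq> {}" "C2 \<noteq> {}" "C3 \<noteq> {}"
  shows "cyclic (vcomb C1 C2 C3) \<longleftrightarrow> cyclic C1 \<and> cyclic C2 \<and> cyclic C3"
proof
  assume cyc: "cyclic (vcomb C1 C2 C3)"
  obtain a b d where "a \<in> C1" "b \<in> C2" "d \<in> C3" using assms by blast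
  with cshift_components_mem [OF cyc] show "cyclic C1 \<and> cyclic C2 \<and> cyclic C3"
    unfolding cyclic_def by blast
qed (use cyclic_vcomb in blast)

end

theorem theorem9:
  fixes C1 C2 C3 :: "'a::{finite, field} list set" and n :: nat
  assumes "linear_code n C1" and "linear_code n C2" and "linear_code n C3"
    and "linear_code n (vcomb C1 C2 C3)"
  shows "cyclic (vcomb C1 C2 C3) \<longleftrightarrow> cyclic C1 \<and> cyclic C2 \<and> cyclic C3"
proof (rule cyclic_vcomb_iff)
  show "\<forall>x\<in>C1. length x = n" "\<forall>x\<in>C2. length x = n" "\<forall>x\<in>C3. length x = n"
    using assms(1-3) by (simp_all add: linear_code_def)
  show "C1 \<noteq> {}" "C2 \<noteq> {}" "C3 \<noteq> {}"
    using assms(1-3) by (auto simp: linear_code_def)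
qed

end
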